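(* Let $\mu=4m^2>0$ and let $\mathcal{M}(\tilde z,a)$ be the crossing-symmetric $2\to2$ scattering amplitude of identical scalars of mass $m$ in a unitary theory, admitting the crossing-symmetric dispersive representation and the power series expansion described in the context. Then for every real $a\in\left(-\frac{2\mu}{9},0\right)\cup\left(0,\frac{4\mu}{9}\right)$, $\alpha_1(a)\neq 0$ and $$\left|\frac{\alpha_n(a)\,a^{2n}}{\alpha_1(a)\,a^2}\right|\le n\qquad\text{for all } n\ge 2.$$
   Context: Shifted Mandelstam variables $s_1=s-\mu/3$, $s_2=t-\mu/3$, $s_3=u-\mu/3$ satisfy $s_1+s_2+s_3=0$. Crossing-symmetric variables $(z,a)$, $a$ real, are defined by $s_k=a-\frac{a(z-z_k)^3}{z^3-1}$, $k=1,2,3$, with $z_k$ the cube roots of unity, and $\tilde z=z^3$. The amplitude, written as $\mathcal{M}(\tilde z,a)$, is assumed to satisfy $$\mathcal{M}(\tilde z,a)=\alpha_0+\frac1\pi\int_{2\mu/3}^\infty\frac{ds_1'}{s_1'}\,\mathcal{A}\left(s_1';s_2^{(+)}(s_1',a)\right)H(s_1',\tilde z),$$ where $\alpha_0=\mathcal{M}(0,a)$, $H(s_1',\tilde z)=\frac{27a^2\tilde z(2s_1'-3a)}{27a^3\tilde z-27a^2\tilde z s_1'-(1-\tilde z)^2(s_1')^3}$, $s_2^{(+)}(s_1',a)=-\frac{s_1'}{2}\left[1-\left(\frac{s_1'+3a}{s_1'-a}\right)^{1/2}\right]$, and $\mathcal{A}(s_1;s_2)$ is the $s$-channel absorptive part;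 and $\mathcal{M}$ has a power series $\mathcal{M}(\tilde z,a)=\sum_{n\ge0}\alpha_n(a)a^{2n}\tilde z^n$ converging on $|\tilde z|<1$. Unitarity means: $\mathcal{A}\left(s_1;s_2^{(+)}(s_1,a)\right)=\Phi(s_1;\alpha)\sum_{\ell\ge0}(2\ell+2\alpha)a_\ell(s_1)C_\ell^{(\alpha)}\left(\sqrt{\xi(s_1,a)}\right)$ with $\alpha=(d-3)/2$ ($d$ the spacetime dimension), $\Phi>0$, $C_\ell^{(\alpha)}$ Gegenbauer polynomials, $\xi(s_1,a)=\left(1+\frac{2s_2^{(+)}(s_1,a)+2\mu/3}{s_1-2\mu/3}\right)^2$, and $0\le a_\ell(s_1)\le1$ for $s_1\ge2\mu/3$. *)

theory Defs
  imports "HOL-Analysis.Analysis"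
begin

text \<open>Gegenbauer polynomial C_n^(alpha)(x), explicit formula
  sum_{k=0}^{n div 2} (-1)^k Gamma(n-k+alpha)/(Gamma(alpha) k! (n-2k)!) (2x)^(n-2k),
  with Gamma(n-k+alpha)/Gamma(alpha) written as a Pochhammer symbol.\<close>
definition gegenbauer :: "nat \<Rightarrow> real \<Rightarrow> real \<Rightarrow> real" where
  "gegenbauer n \<alpha> x =
     (\<Sum>k\<le>n div 2. (-1) ^ k * pochhammer \<alpha> (n - k)
        / (fact k * fact (n - 2 * k)) * (2 * x) ^ (n - 2 * k))"

definition s2plus :: "real \<Rightarrow> real \<Rightarrow> real" where
  "s2plus s a = - (s / 2) * (1 - sqrt ((s + 3 * a) / (s - a)))"

definition xi :: "real \<Rightarrow> real \<Rightarrow> real \<Rightarrow> real" where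
  "xi \<mu> s a = (1 + (2 * s2plus s a + 2 * \<mu> / 3) / (s - 2 * \<mu> / 3)) ^ 2"

definition Hker :: "real \<Rightarrow> real \<Rightarrow> complex \<Rightarrow> complex" where
  "Hker a s z = (27 * of_real (a ^ 2) * z * of_real (2 * s - 3 * a))
      / (27 * of_real (a ^ 3) * z - 27 * of_real (a ^ 2) * z * of_real s
         - (1 - z) ^ 2 * of_real (s ^ 3))"

end

theory Submission
  imports Defs "HOL-Complex_Analysis.Complex_Analysis"
begin

(* Unitarity makes the absorptive part A nonnegative: in the physical region xi >= 1, and for
   alpha >= 1/2 the three-term recurrence shows that l |-> C_l^(alpha)(x) is increasing, hence
   >= 1, at x >= 1.  There the kernel factors as H = -K z / (1 - 2 t z + z^2) with K > 0 and
   |t| <= 1, so H = -K z sum_n U_n(t) z^n with Chebyshev polynomials |U_n(t)| <= n + 1.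
   Integrating termwise against the weight w = K A / s_1' >= 0 identifies the Taylor coefficients,
   alpha_(n+1) a^(2n+2) = -(1/pi) int w U_n(t).  For n = 0 this is -(1/pi) int w, which is nonzero
   in an interacting theory, and in general it is bounded by (n + 1)/pi int w. *)

section \<open>Gegenbauer polynomials\<close>

definition gegenbauer_term :: "real \<Rightarrow> real \<Rightarrow> nat \<Rightarrow> nat \<Rightarrow> real" where
  "gegenbauer_term \<alpha> x n k = (if 2 * k \<le> n then (-1) ^ k * pochhammer \<alpha> (n - k)
     / (fact k * fact (n - 2 * k)) * (2 * x) ^ (n - 2 * k) else 0)"

lemma gegenbauer_eq_sum_terms:
  assumes "n div 2 \<le> N"
  shows "gegenbauer n \<alpha> x = (\<Sum>k\<le>N. gegenbauer_term \<alpha> x n k)"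
proof -
  have "gegenbauer n \<alpha> x = (\<Sum>k\<le>n div 2. gegenbauer_term \<alpha> x n k)"
    unfolding gegenbauer_def by (rule sum.cong) (auto simp: gegenbauer_term_def)
  also have "\<dots> = (\<Sum>k\<le>N. gegenbauer_term \<alpha> x n k)"
    by (rule sum.mono_neutral_left) (use assms in \<open>auto simp: gegenbauer_term_def\<close>)
  finally show ?thesis .
qed

lemma gegenbauer_term_recurrence_0:
  "real (n + 2) * gegenbauer_term \<alpha> x (n + 2) 0 =
     2 * x * (real n + 1 + \<alpha>) * gegenbauer_term \<alpha> x (n + 1) 0"
proof -
  define c where "c = pochhammer \<alpha> (n + 1) / fact (n + 1) * (2 * x) ^ (n + 1)"
  have "gegenbauer_term \<alpha> x (n + 2) 0 = c * (\<alpha> + real n + 1) * (2 * x) / real (n + 2)"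
    unfolding c_def gegenbauer_term_def
    using pochhammer_Suc[of \<alpha> "n + 1"] fact_Suc[of "n + 1"] by (simp add: field_simps)
  moreover have "gegenbauer_term \<alpha> x (n + 1) 0 = c"
    by (simp add: c_def gegenbauer_term_def)
  ultimately show ?thesis by (simp add: field_simps)
qed

lemma gegenbauer_term_recurrence_Suc:
  assumes "2 * Suc j \<le> n + 2"
  shows "real (n + 2) * gegenbauer_term \<alpha> x (n + 2) (Suc j) =
     2 * x * (real n + 1 + \<alpha>) * gegenbauer_term \<alpha> x (n + 1) (Suc j)
     - (real n + 2 * \<alpha>) * gegenbauer_term \<alpha> x n j"
proof -
  consider r where "n = 2 * j + 1 + r" | "n = 2 * j"
  proof (cases "2 * j < n")
    case True
    then obtain r where "n = 2 * j + 1 + r" using less_imp_Suc_add by fastforce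
    then show ?thesis using that(1) by blast
  next
    case False
    then have "n = 2 * j" using assms by simp
    then show ?thesis by (rule that(2))
  qed
  then show ?thesis
  proof cases
    case (1 r)
    define c where "c = (-1) ^ j * pochhammer \<alpha> (j + r + 1) * (2 * x) ^ r
      / (fact j * fact r * (real j + 1) * (real r + 1))"
    have T2: "gegenbauer_term \<alpha> x (n + 2) (Suc j) = - c * (\<alpha> + real j + real r + 1) * (2 * x)"
      unfolding c_def gegenbauer_term_def
      using 1 pochhammer_Suc[of \<alpha> "j + r + 1"] by (simp add: divide_simps ac_simps)
    have T1: "gegenbauer_term \<alpha> x (n + 1) (Suc j) = - c * (real r + 1)"
      unfolding c_def gegenbauer_term_def using 1 by (simp add: divide_simps ac_simps)
    have T0: "gegenbauer_term \<alpha> x n j = c * (real j + 1) * (2 * x)"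
      unfolding c_def gegenbauer_term_def using 1 by (simp add: divide_simps ac_simps)
    show ?thesis unfolding T2 T1 T0 using 1 by (simp add: algebra_simps)
  next
    case 2
    define c where "c = (-1) ^ j * pochhammer \<alpha> j / (fact j * (real j + 1))"
    have T2: "gegenbauer_term \<alpha> x (n + 2) (Suc j) = - c * (\<alpha> + real j)"
      unfolding c_def gegenbauer_term_def
      using 2 pochhammer_Suc[of \<alpha> j] by (simp add: divide_simps ac_simps)
    have T1: "gegenbauer_term \<alpha> x (n + 1) (Suc j) = 0"
      unfolding gegenbauer_term_def using 2 by simp
    have T0: "gegenbauer_term \<alpha> x n j = c * (real j + 1)"
      unfolding c_def gegenbauer_term_def using 2 by (simp add: divide_simps ac_simps)
    show ?thesis unfolding T2 T1 T0 using 2 by (simp add: algebra_simps)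
  qed
qed

lemma gegenbauer_recurrence:
  "real (n + 2) * gegenbauer (n + 2) \<alpha> x =
     2 * x * (real n + 1 + \<alpha>) * gegenbauer (n + 1) \<alpha> x - (real n + 2 * \<alpha>) * gegenbauer n \<alpha> x"
proof -
  let ?T = "gegenbauer_term \<alpha> x"
  have "gegenbauer n \<alpha> x = (\<Sum>k\<le>n + 2. ?T n k)"
    by (rule gegenbauer_eq_sum_terms) simp
  also have "\<dots> = (\<Sum>k\<le>Suc (n + 2). if k = 0 then 0 else ?T n (k - 1))"
    by (subst sum.atMost_Suc_shift) simp
  finally have G0: "gegenbauer n \<alpha> x = (\<Sum>k\<le>Suc (n + 2). if k = 0 then 0 else ?T n (k - 1))" .
  have termwise: "real (n + 2) * ?T (n + 2) k =
      2 * x * (real n + 1 + \<alpha>) * ?T (n + 1) k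
      - (real n + 2 * \<alpha>) * (if k = 0 then 0 else ?T n (k - 1))"
    for k
  proof (cases k)
    case (Suc j)
    then show ?thesis
      using gegenbauer_term_recurrence_Suc[of j n \<alpha> x]
      by (cases "2 * k \<le> n + 2") (auto simp: gegenbauer_term_def)
  qed (use gegenbauer_term_recurrence_0 in simp)
  have G2: "gegenbauer (n + 2) \<alpha> x = (\<Sum>k\<le>Suc (n + 2). ?T (n + 2) k)"
    and G1: "gegenbauer (n + 1) \<alpha> x = (\<Sum>k\<le>Suc (n + 2). ?T (n + 1) k)"
    by (rule gegenbauer_eq_sum_terms; simp)+
  show ?thesis
    unfolding G0 G1 G2 sum_distrib_left sum_subtractf[symmetric]
    by (rule sum.cong[OF refl]) (rule termwise)
qed

lemma gegenbauer_0 [simp]: "gegenbauer 0 \<alpha> x = 1"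
  by (simp add: gegenbauer_def)

lemma gegenbauer_1 [simp]: "gegenbauer (Suc 0) \<alpha> x = 2 * \<alpha> * x"
  by (simp add: gegenbauer_def)

lemma gegenbauer_ge_one_mono:
  assumes "1 \<le> x" and "1/2 \<le> \<alpha>"
  shows "1 \<le> gegenbauer n \<alpha> x \<and> gegenbauer n \<alpha> x \<le> gegenbauer (Suc n) \<alpha> x"
proof (induction n)
  case 0
  have "1 \<le> 2 * \<alpha>" using assms by simp
  also have "\<dots> \<le> 2 * \<alpha> * x" using assms by simp
  finally show ?case by simp
next
  case (Suc n)
  let ?G = "\<lambda>n. gegenbauer n \<alpha> x"
  have "real (n + 2) * ?G (n + 1)
      = 2 * (real n + 1 + \<alpha>) * ?G (n + 1) - (real n + 2 * \<alpha>) * ?G (n + 1)"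
    by (simp add: algebra_simps)
  also have "\<dots> \<le> 2 * x * (real n + 1 + \<alpha>) * ?G (n + 1) - (real n + 2 * \<alpha>) * ?G n"
    using Suc assms by (intro diff_mono mult_right_mono mult_left_mono) auto
  also have "\<dots> = real (n + 2) * ?G (n + 2)"
    by (rule gegenbauer_recurrence[symmetric])
  finally have "?G (n + 1) \<le> ?G (n + 2)"
    by (simp del: of_nat_add)
  then show ?case using Suc by simp
qed

lemma partial_wave_sum_nonneg:
  fixes pw :: "nat \<Rightarrow> real"
  assumes "1/2 \<le> \<alpha>" and "1 \<le> x" and "0 < \<Phi>" and "\<And>l. 0 \<le> pw l"
    and "(\<lambda>l. \<Phi> * ((2 * real l + 2 * \<alpha>) * pw l * gegenbauer l \<alpha> x)) sums A"
  shows "0 \<le> A"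
proof (rule sums_le[OF _ sums_zero assms(5)])
  fix l
  have "0 \<le> gegenbauer l \<alpha> x"
    using gegenbauer_ge_one_mono[OF assms(2,1), of l] by linarith
  then show "0 \<le> \<Phi> * ((2 * real l + 2 * \<alpha>) * pw l * gegenbauer l \<alpha> x)"
    using assms by (intro mult_nonneg_nonneg) auto
qed

section \<open>Chebyshev polynomials of the second kind\<close>

definition cos_point :: "real \<Rightarrow> complex" where
  "cos_point t = Complex t (sqrt (1 - t^2))"

lemma norm_cos_point: "\<bar>t\<bar> \<le> 1 \<Longrightarrow> norm (cos_point t) = 1"
  by (simp add: cos_point_def cmod_def abs_square_le_1)

lemma cos_point_factorization:
  assumes "\<bar>t\<bar> \<le> 1"
  shows "(1 - cos_point t * z) * (1 - cnj (cos_point t) * z) = 1 - 2 * of_real t * z + z^2"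
proof -
  have "(1 - cos_point t * z) * (1 - cnj (cos_point t) * z)
      = 1 - (cos_point t + cnj (cos_point t)) * z + cos_point t * cnj (cos_point t) * z^2"
    by (simp add: algebra_simps power2_eq_square)
  also have "cos_point t * cnj (cos_point t) = 1"
    using norm_cos_point[OF assms] by (simp add: complex_mult_cnj cmod_def)
  also have "cos_point t + cnj (cos_point t) = 2 * of_real t"
    by (simp add: cos_point_def complex_add_cnj)
  finally show ?thesis by simp
qed

(* For |t| <= 1, t = cos theta, we have cos_point t = exp (i theta) and this is the Chebyshev
   polynomial U_n(t) = sin ((n + 1) theta) / sin theta. *)
definition chebyshev_U :: "nat \<Rightarrow> real \<Rightarrow> complex" where
  "chebyshev_U n t = (\<Sum>i\<le>n. cos_point t ^ i * cnj (cos_point t) ^ (n - i))"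

lemma chebyshev_U_0 [simp]: "chebyshev_U 0 t = 1"
  by (simp add: chebyshev_U_def)

lemma norm_sum_powers_le:
  fixes w v :: "'a::real_normed_div_algebra"
  assumes "norm w \<le> 1" and "norm v \<le> 1"
  shows "norm (\<Sum>i\<le>n. w^i * v^(n - i)) \<le> real n + 1"
proof -
  have "norm (\<Sum>i\<le>n. w^i * v^(n - i)) \<le> (\<Sum>i\<le>n. norm (w^i * v^(n - i)))"
    by (rule norm_sum)
  also have "\<dots> \<le> (\<Sum>i\<le>n. 1)"
    using assms by (intro sum_mono) (simp add: norm_mult norm_power power_le_one mult_le_one)
  finally show ?thesis by simp
qed

lemma norm_chebyshev_U_le: "\<bar>t\<bar> \<le> 1 \<Longrightarrow> norm (chebyshev_U n t) \<le> real n + 1"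
  unfolding chebyshev_U_def by (rule norm_sum_powers_le) (simp_all add: norm_cos_point)

lemma geometric_product_sums:
  fixes w v z :: "'a::{real_normed_field,banach}"
  assumes "norm (w * z) < 1" and "norm (v * z) < 1"
  shows "(\<lambda>n. (\<Sum>i\<le>n. w^i * v^(n - i)) * z^n) sums (1 / ((1 - w * z) * (1 - v * z)))"
proof -
  have "(\<lambda>n. \<Sum>i\<le>n. (w * z)^i * (v * z)^(n - i)) sums ((\<Sum>n. (w * z)^n) * (\<Sum>n. (v * z)^n))"
    using assms by (intro Cauchy_product_sums) (simp_all add: norm_power summable_geometric)
  moreover have "(w * z)^i * (v * z)^(n - i) = w^i * v^(n - i) * z^n" if "i \<le> n" for i n
    using that by (simp add: power_mult_distrib algebra_simps flip: power_add)
  ultimately show ?thesis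
    using assms by (simp add: suminf_geometric sum_distrib_right)
qed

lemma chebyshev_U_sums:
  assumes "\<bar>t\<bar> \<le> 1" and "norm z < 1"
  shows "(\<lambda>n. chebyshev_U n t * z^n) sums (1 / (1 - 2 * of_real t * z + z^2))"
proof -
  have "norm (cos_point t * z) < 1" "norm (cnj (cos_point t) * z) < 1"
    using assms by (simp_all add: norm_mult norm_cos_point)
  from geometric_product_sums[OF this] show ?thesis
    unfolding chebyshev_U_def cos_point_factorization[OF assms(1)] .
qed

lemma chebyshev_U_measurable [measurable]: "chebyshev_U n \<in> borel_measurable borel"
  unfolding chebyshev_U_def cos_point_def Complex_eq
  by (intro borel_measurable_continuous_onI continuous_intros)

section \<open>Power series with a positive Chebyshev representation\<close>

lemma powser_coeffs_unique:
  fixes a b :: "nat \<Rightarrow> complex"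
  assumes "0 < r"
    and a: "\<And>z. norm z < r \<Longrightarrow> (\<lambda>n. a n * z^n) sums f z"
    and b: "\<And>z. norm z < r \<Longrightarrow> (\<lambda>n. b n * z^n) sums f z"
  shows "a = b"
proof -
  have radius: "0 < fps_conv_radius (Abs_fps c)"
    if "\<And>z. norm z < r \<Longrightarrow> (\<lambda>n. c n * z^n) sums f z" for c
  proof -
    have "summable (\<lambda>n. c n * of_real (r / 2) ^ n)"
      using that[of "of_real (r / 2)"] \<open>0 < r\<close> by (simp add: sums_iff)
    then have "ereal (r / 2) \<le> conv_radius c"
      using conv_radius_geI \<open>0 < r\<close> by fastforce
    then show ?thesis
      using \<open>0 < r\<close> by (simp add: fps_conv_radius_def)
        (metis ereal_less(2) half_gt_zero order_less_le_trans zero_ereal_def)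
  qed
  have "eventually (\<lambda>z. z \<in> ball 0 r) (nhds 0)"
    using \<open>0 < r\<close> by (intro eventually_nhds_in_open) auto
  then have "eventually (\<lambda>z. eval_fps (Abs_fps a) z = eval_fps (Abs_fps b) z) (nhds 0)"
    by eventually_elim (use a b in \<open>simp add: eval_fps_def sums_iff\<close>)
  then have "Abs_fps a = Abs_fps b"
    using radius a b by (intro eval_fps_eqD) auto
  then show ?thesis by (intro ext) (metis fps_nth_Abs_fps)
qed

(* At z = 1/2 the kernel is 2 / (5 - 4 t), which lies between 2/9 and 2 for |t| <= 1. *)
lemma integrable_weight_of_kernel:
  fixes F t :: "real \<Rightarrow> real"
  assumes F_nonneg: "\<And>s. 0 \<le> F s" and t_meas: "t \<in> borel_measurable borel"
    and t_bound: "\<And>s. F s \<noteq> 0 \<Longrightarrow> \<bar>t s\<bar> \<le> 1"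
    and kernel_int: "integrable lborel
      (\<lambda>s. of_real (F s) * (1/2) / (1 - 2 * of_real (t s) * (1/2) + (1/2)^2 :: complex))"
  shows "integrable lborel F"
proof -
  define G where
    "G s = of_real (F s) * (1/2) / (1 - 2 * of_real (t s) * (1/2) + (1/2)^2 :: complex)" for s
  have G_eq: "G s = of_real (F s / (5/2 - 2 * t s))" for s
    by (simp add: G_def field_simps power2_eq_square)
  have F_eq: "F s = Re (G s) * (5/2 - 2 * t s)" for s
    using t_bound[of s] by (cases "F s = 0") (auto simp: G_eq)
  have bound: "norm (F s) \<le> 9/2 * norm (G s)" for s
  proof (cases "F s = 0")
    case False
    then have "\<bar>5/2 - 2 * t s\<bar> \<le> 9/2" using t_bound[of s] by linarith
    then have "\<bar>Re (G s)\<bar> * \<bar>5/2 - 2 * t s\<bar> \<le> norm (G s) * (9/2)"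
      by (intro mult_mono abs_Re_le_cmod) auto
    then show ?thesis
      unfolding F_eq[of s] by (simp add: abs_mult mult.commute)
  qed simp
  have G_int: "integrable lborel G"
    unfolding G_def[abs_def] by (rule kernel_int)
  show ?thesis
  proof (rule Bochner_Integration.integrable_bound)
    show "integrable lborel (\<lambda>s. 9/2 * norm (G s))"
      using G_int by simp
    have "(\<lambda>s. Re (G s) * (5/2 - 2 * t s)) \<in> borel_measurable lborel"
      using borel_measurable_integrable[OF G_int] t_meas by measurable
    then show "F \<in> borel_measurable lborel"
      by (simp only: F_eq[symmetric])
    show "AE s in lborel. norm (F s) \<le> norm (9/2 * norm (G s))"
      using bound by (intro AE_I2) simp
  qed
qed

lemma norm_weight_chebyshev_U_le:
  assumes "0 \<le> F s" and "F s \<noteq> 0 \<Longrightarrow> \<bar>t s\<bar> \<le> 1"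
  shows "norm (of_real (F s) * chebyshev_U n (t s)) \<le> (real n + 1) * F s"
proof (cases "F s = 0")
  case False
  then show ?thesis
    using assms norm_chebyshev_U_le[of "t s" n]
    by (simp add: norm_mult mult.commute mult_left_mono)
qed simp

lemma integrable_weight_chebyshev_U:
  fixes F t :: "real \<Rightarrow> real"
  assumes "\<And>s. 0 \<le> F s" and "integrable lborel F" and [measurable]: "t \<in> borel_measurable borel"
    and "\<And>s. F s \<noteq> 0 \<Longrightarrow> \<bar>t s\<bar> \<le> 1"
  shows "integrable lborel (\<lambda>s. of_real (F s) * chebyshev_U n (t s))"
proof (rule Bochner_Integration.integrable_bound)
  show "integrable lborel (\<lambda>s. (real n + 1) * F s)"
    using assms(2) by simp
  show "(\<lambda>s. of_real (F s) * chebyshev_U n (t s)) \<in> borel_measurable lborel"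
    using borel_measurable_integrable[OF assms(2)] by measurable
  show "AE s in lborel. norm (of_real (F s) * chebyshev_U n (t s)) \<le> norm ((real n + 1) * F s)"
    using assms norm_weight_chebyshev_U_le[of F] by (intro AE_I2) (simp add: abs_of_nonneg)
qed

lemma chebyshev_moments_sums:
  fixes F t :: "real \<Rightarrow> real" and z :: complex
  assumes F_nonneg: "\<And>s. 0 \<le> F s" and F_int: "integrable lborel F"
    and t_meas: "t \<in> borel_measurable borel" and t_bound: "\<And>s. F s \<noteq> 0 \<Longrightarrow> \<bar>t s\<bar> \<le> 1"
    and z: "norm z < 1"
  shows "(\<lambda>n. (LINT s|lborel. of_real (F s) * chebyshev_U n (t s)) * z^Suc n) sums
    (LINT s|lborel. of_real (F s) * z / (1 - 2 * of_real (t s) * z + z^2))"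
proof -
  define h where "h n s = of_real (F s) * chebyshev_U n (t s) * z^Suc n" for n s
  have h_int: "integrable lborel (h n)" for n
    unfolding h_def using integrable_weight_chebyshev_U[OF F_nonneg F_int t_meas t_bound] by simp
  have h_sums: "(\<lambda>n. h n s) sums (of_real (F s) * z / (1 - 2 * of_real (t s) * z + z^2))" for s
  proof (cases "F s = 0")
    case False
    from sums_mult[OF chebyshev_U_sums[OF t_bound[OF False] z], of "of_real (F s) * z"]
    show ?thesis by (simp add: h_def algebra_simps)
  qed (simp add: h_def)
  have h_bound: "norm (h n s) \<le> F s * norm z * (real (Suc n) * norm z ^ n)" for n s
  proof -
    have "norm (h n s) = norm (of_real (F s) * chebyshev_U n (t s)) * (norm z * norm z ^ n)"
      by (simp add: h_def norm_mult norm_power)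
    also have "\<dots> \<le> ((real n + 1) * F s) * (norm z * norm z ^ n)"
      using F_nonneg t_bound by (intro mult_right_mono norm_weight_chebyshev_U_le) auto
    finally show ?thesis by (simp add: algebra_simps)
  qed
  have geom: "summable (\<lambda>n. real (Suc n) * norm z ^ n)"
    using geometric_deriv_sums[of "norm z"] z by (simp add: sums_iff)
  have "(\<lambda>n. integral\<^sup>L lborel (h n)) sums (LINT s|lborel. (\<Sum>n. h n s))"
  proof (rule sums_integral[OF h_int])
    show "AE s in lborel. summable (\<lambda>n. norm (h n s))"
      using h_bound by (intro AE_I2 summable_comparison_test[OF _ summable_mult[OF geom]]) auto
    have "integral\<^sup>L lborel (\<lambda>s. norm (h n s))
        \<le> integral\<^sup>L lborel (\<lambda>s. F s * norm z * (real (Suc n) * norm z ^ n))" for n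
      using h_int F_int h_bound by (intro integral_mono) auto
    then show "summable (\<lambda>n. integral\<^sup>L lborel (\<lambda>s. norm (h n s)))"
      by (intro summable_comparison_test[OF _ summable_mult[OF geom]]) auto
  qed
  moreover have "integral\<^sup>L lborel (h n) =
      (LINT s|lborel. of_real (F s) * chebyshev_U n (t s)) * z^Suc n" for n
    unfolding h_def by (rule integral_mult_left_zero)
  ultimately show ?thesis
    using h_sums by (simp add: sums_iff)
qed

lemma powser_coeff_eq_chebyshev_moment:
  fixes F t :: "real \<Rightarrow> real" and c :: "nat \<Rightarrow> complex" and f :: "complex \<Rightarrow> complex"
  assumes F_nonneg: "\<And>s. 0 \<le> F s" and F_int: "integrable lborel F"
    and t_meas: "t \<in> borel_measurable borel" and t_bound: "\<And>s. F s \<noteq> 0 \<Longrightarrow> \<bar>t s\<bar> \<le> 1"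
    and series: "\<And>z. norm z < 1 \<Longrightarrow> (\<lambda>n. c n * z^n) sums f z"
    and disp: "\<And>z. norm z < 1 \<Longrightarrow> f z = f 0 + C *
      (LINT s|lborel. of_real (F s) * z / (1 - 2 * of_real (t s) * z + z^2))"
  shows "c (Suc n) = C * (LINT s|lborel. of_real (F s) * chebyshev_U n (t s))"
proof -
  define b where "b n = (if n = 0 then f 0
    else C * (LINT s|lborel. of_real (F s) * chebyshev_U (n - 1) (t s)))" for n
  have "(\<lambda>n. b n * z^n) sums f z" if "norm z < 1" for z
  proof -
    have "(\<lambda>n. b (Suc n) * z^Suc n) sums
        (C * (LINT s|lborel. of_real (F s) * z / (1 - 2 * of_real (t s) * z + z^2)))"
      using sums_mult[OF chebyshev_moments_sums[OF F_nonneg F_int t_meas t_bound that], of C]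
      by (simp add: b_def mult.assoc)
    then have "(\<lambda>n. b n * z^n) sums
        (C * (LINT s|lborel. of_real (F s) * z / (1 - 2 * of_real (t s) * z + z^2)) + b 0 * z^0)"
      by (rule sums_Suc_iff[THEN iffD1])
    then show ?thesis
      using disp[OF that] by (simp add: b_def add.commute)
  qed
  then have "c = b"
    using series by (intro powser_coeffs_unique[of 1]) auto
  then show ?thesis
    by (simp add: b_def)
qed

lemma powser_coeff_ratio_le_of_chebyshev_moments:
  fixes F t :: "real \<Rightarrow> real" and c :: "nat \<Rightarrow> complex" and f :: "complex \<Rightarrow> complex"
  assumes F_nonneg: "\<And>s. 0 \<le> F s" and nontrivial: "\<not> (AE s in lborel. F s = 0)"
    and t_meas: "t \<in> borel_measurable borel" and t_bound: "\<And>s. F s \<noteq> 0 \<Longrightarrow> \<bar>t s\<bar> \<le> 1"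
    and kernel_int: "\<And>z::complex. norm z < 1 \<Longrightarrow>
      integrable lborel (\<lambda>s. of_real (F s) * z / (1 - 2 * of_real (t s) * z + z^2))"
    and series: "\<And>z. norm z < 1 \<Longrightarrow> (\<lambda>n. c n * z^n) sums f z"
    and disp: "\<And>z. norm z < 1 \<Longrightarrow> f z = f 0 + C *
      (LINT s|lborel. of_real (F s) * z / (1 - 2 * of_real (t s) * z + z^2))"
    and "C \<noteq> 0"
  shows "c 1 \<noteq> 0" and "1 \<le> n \<Longrightarrow> norm (c n / c 1) \<le> real n"
proof -
  have "norm (1/2 :: complex) < 1"
    by (simp add: norm_divide)
  from integrable_weight_of_kernel[OF F_nonneg t_meas t_bound kernel_int[OF this]]
  have F_int: "integrable lborel F" .
  note coeff = powser_coeff_eq_chebyshev_moment[OF F_nonneg F_int t_meas t_bound series disp]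
  have "integral\<^sup>L lborel F \<noteq> 0"
    using integral_nonneg_eq_0_iff_AE[OF F_int] F_nonneg nontrivial by simp
  moreover have c1: "c 1 = C * of_real (integral\<^sup>L lborel F)"
    using coeff[where n = 0] by simp
  ultimately have "c 1 \<noteq> 0"
    using \<open>C \<noteq> 0\<close> by simp
  then show "c 1 \<noteq> 0" .
  assume "1 \<le> n"
  then obtain m where n: "n = Suc m"
    using not0_implies_Suc by force
  have "norm (LINT s|lborel. of_real (F s) * chebyshev_U m (t s)) \<le> (LINT s|lborel. (real m + 1) * F s)"
    using F_int F_nonneg t_bound
    by (intro Bochner_Integration.integral_norm_bound_integral integrable_weight_chebyshev_U
        norm_weight_chebyshev_U_le t_meas) auto
  moreover have "c n = C * (LINT s|lborel. of_real (F s) * chebyshev_U m (t s))"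
    unfolding n by (rule coeff)
  ultimately have "norm (c n) \<le> norm C * ((real m + 1) * integral\<^sup>L lborel F)"
    by (simp add: norm_mult mult_left_mono)
  also have "\<dots> = real n * norm (c 1)"
    using F_nonneg unfolding n c1 by (simp add: norm_mult integral_nonneg)
  finally show "norm (c n / c 1) \<le> real n"
    using \<open>c 1 \<noteq> 0\<close> by (simp add: norm_divide pos_divide_le_eq)
qed

section \<open>Kinematics of the crossing-symmetric kernel\<close>

lemma sqrt_xi_ge_one:
  assumes "0 < \<mu>" and "-(2 * \<mu> / 9) < a" and "a < 4 * \<mu> / 9" and "2 * \<mu> / 3 \<le> s"
  shows "1 \<le> sqrt (xi \<mu> s a)"
proof -
  define p where "p = 2 * \<mu> / 3"
  have p: "0 < p" "p \<le> s" "- p / 3 < a" and s: "0 < s" "0 < s - a"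
    using assms by (auto simp: p_def)
  have "(s - p)^2 * (s - a) \<le> (s + 3 * a) * s^2"
  proof -
    have "(s + 3 * a) * s^2 - (s - p)^2 * (s - a)
        = (s - p) * (2 * p * s / 3 + p^2 / 3) + (a + p / 3) * (3 * s^2 + (s - p)^2)"
      by (simp add: field_simps power2_eq_square)
    also have "\<dots> \<ge> 0"
      by (rule add_nonneg_nonneg; rule mult_nonneg_nonneg) (use p in auto)
    finally show ?thesis by simp
  qed
  then have "((s - p) / s)^2 \<le> (s + 3 * a) / (s - a)"
    using s by (simp add: power_divide divide_le_eq le_divide_eq mult.commute)
  then have "(s - p) / s \<le> sqrt ((s + 3 * a) / (s - a))"
    using p s real_sqrt_le_mono by fastforce
  then have "s / 2 * ((s - p) / s - 1) \<le> s / 2 * (sqrt ((s + 3 * a) / (s - a)) - 1)"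
    using s by (intro mult_left_mono) auto
  then have "0 \<le> 2 * s2plus s a + p"
    using s by (simp add: s2plus_def field_simps)
  then have "1 \<le> 1 + (2 * s2plus s a + 2 * \<mu> / 3) / (s - 2 * \<mu> / 3)"
    using p by (simp add: p_def)
  then show ?thesis by (simp add: xi_def)
qed

lemma partial_wave_sum_nonneg_physical:
  assumes "0 < \<mu>" and "a \<in> {-(2 * \<mu> / 9)<..<0} \<union> {0<..<4 * \<mu> / 9}" and "2 * \<mu> / 3 \<le> s"
    and "4 \<le> d" and "0 < \<Phi>" and "\<And>l. 0 \<le> pw l"
    and "(\<lambda>l. \<Phi> * ((2 * real l + 2 * ((real d - 3) / 2)) * pw l
      * gegenbauer l ((real d - 3) / 2) (sqrt (xi \<mu> s a)))) sums A"
  shows "0 \<le> A"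
proof (rule partial_wave_sum_nonneg[OF _ _ assms(5-7)])
  show "1/2 \<le> (real d - 3) / 2"
    using assms(4) by simp
  show "1 \<le> sqrt (xi \<mu> s a)"
    using assms(1-3) by (intro sqrt_xi_ge_one) auto
qed

definition Hker_scale :: "real \<Rightarrow> real \<Rightarrow> real" where
  "Hker_scale a s = 27 * a^2 * (2 * s - 3 * a) / s^3"

definition Hker_cos :: "real \<Rightarrow> real \<Rightarrow> real" where
  "Hker_cos a s = 1 - 27 * a^2 * (s - a) / (2 * s^3)"

lemma Hker_eq_scale_cos:
  assumes "s \<noteq> 0"
  shows "Hker a s z =
    - of_real (Hker_scale a s) * z / (1 - 2 * of_real (Hker_cos a s) * z + z^2)"
proof -
  define Q where "Q = 1 - 2 * complex_of_real (Hker_cos a s) * z + z^2"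
  have denom: "27 * of_real (a^3) * z - 27 * of_real (a^2) * z * of_real s
      - (1 - z)^2 * of_real (s^3) = - of_real (s^3) * Q"
    using assms by (simp add: Q_def Hker_cos_def field_simps power2_eq_square power3_eq_cube)
  show ?thesis
    unfolding Hker_def denom Q_def[symmetric] Hker_scale_def
    using assms by (cases "Q = 0") (simp_all add: field_simps)
qed

lemma abs_Hker_cos_le_one:
  assumes "0 < s" and "a < s" and "0 < s + 3 * a"
  shows "\<bar>Hker_cos a s\<bar> \<le> 1"
proof -
  define X where "X = 27 * a^2 * (s - a) / s^3"
  have "4 * s^3 - 27 * a^2 * (s - a) = (2 * s - 3 * a)^2 * (s + 3 * a)"
    by (simp add: algebra_simps power2_eq_square power3_eq_cube)
  also have "\<dots> \<ge> 0" using assms by simp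
  finally have "X \<le> 4"
    using assms by (simp add: X_def divide_le_eq)
  moreover have "0 \<le> X"
    using assms by (simp add: X_def)
  moreover have "Hker_cos a s = 1 - X / 2"
    by (simp add: Hker_cos_def X_def)
  ultimately show ?thesis by simp
qed

lemma physical_region_Hker_bounds:
  assumes "0 < \<mu>" and "a \<in> {-(2 * \<mu> / 9)<..<0} \<union> {0<..<4 * \<mu> / 9}" and "2 * \<mu> / 3 \<le> s"
  shows "0 < s" and "0 < Hker_scale a s" and "\<bar>Hker_cos a s\<bar> \<le> 1"
proof -
  have "0 < s" "a < s" "0 < s + 3 * a" "3 * a < 2 * s" "a \<noteq> 0"
    using assms by auto
  then show "0 < s" and "0 < Hker_scale a s" and "\<bar>Hker_cos a s\<bar> \<le> 1"
    by (simp_all add: Hker_scale_def abs_Hker_cos_le_one)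
qed

lemma Hker_cos_measurable [measurable]: "Hker_cos a \<in> borel_measurable borel"
  unfolding Hker_cos_def by measurable

lemma indicator_Hker_eq:
  assumes "\<And>s. s \<in> S \<Longrightarrow> s \<noteq> 0"
  shows "indicator S s *\<^sub>R (of_real (g s) * Hker a s z) =
    - (of_real (indicator S s * g s * Hker_scale a s) * z
        / (1 - 2 * of_real (Hker_cos a s) * z + z^2))"
  using assms[of s] by (cases "s \<in> S") (simp_all add: Hker_eq_scale_cos)

theorem theorem7:
  fixes m \<mu> a :: real
    and d :: nat
    and M :: "complex \<Rightarrow> real \<Rightarrow> complex"
    and coef :: "nat \<Rightarrow> real \<Rightarrow> complex"
    and Abs :: "real \<Rightarrow> real \<Rightarrow> real"
    and \<Phi> :: "real \<Rightarrow> real"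
    and pw :: "nat \<Rightarrow> real \<Rightarrow> real"
  assumes m_pos: "m > 0" and mu_def: "\<mu> = 4 * m ^ 2"
    and dim: "d \<ge> 4"
    and a_range: "a \<in> {-(2 * \<mu> / 9)<..<0} \<union> {0<..<4 * \<mu> / 9}"
    \<comment> \<open>crossing-symmetric dispersive representation on the unit disk\<close>
    and disp_int: "\<And>z. norm z < 1 \<Longrightarrow>
        set_integrable lborel {2 * \<mu> / 3..}
          (\<lambda>s. of_real (Abs s (s2plus s a) / s) * Hker a s z)"
    and disp: "\<And>z. norm z < 1 \<Longrightarrow>
        M z a = M 0 a + of_real (1 / pi) *
          (LINT s:{2 * \<mu> / 3..}|lborel. of_real (Abs s (s2plus s a) / s) * Hker a s z)"
    \<comment> \<open>power series expansion in z~, converging on the unit disk\<close>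
    and series: "\<And>z. norm z < 1 \<Longrightarrow>
        (\<lambda>n. coef n a * of_real (a ^ (2 * n)) * z ^ n) sums M z a"
    \<comment> \<open>unitarity: partial-wave expansion of the absorptive part\<close>
    and Phi_pos: "\<And>s. s \<ge> 2 * \<mu> / 3 \<Longrightarrow> \<Phi> s > 0"
    and pw_bounds: "\<And>l s. s \<ge> 2 * \<mu> / 3 \<Longrightarrow> 0 \<le> pw l s \<and> pw l s \<le> 1"
    and unitarity: "\<And>s. s \<ge> 2 * \<mu> / 3 \<Longrightarrow>
        (\<lambda>l. \<Phi> s * ((2 * real l + 2 * ((real d - 3) / 2)) * pw l s
             * gegenbauer l ((real d - 3) / 2) (sqrt (xi \<mu> s a))))
        sums Abs s (s2plus s a)"
    \<comment> \<open>non-trivial (interacting) theory: absorptive part not a.e. zero\<close>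
    and nontrivial: "\<not> (AE s in lborel. s \<ge> 2 * \<mu> / 3 \<longrightarrow> Abs s (s2plus s a) = 0)"
  shows "coef 1 a \<noteq> 0 \<and>
    (\<forall>n\<ge>2. norm ((coef n a * of_real (a ^ (2 * n))) / (coef 1 a * of_real (a ^ 2)))
              \<le> real n)"
proof -
  have "0 < \<mu>"
    using m_pos mu_def by simp
  define S where "S = {2 * \<mu> / 3..}"
  define F where "F s = indicator S s * (Abs s (s2plus s a) / s) * Hker_scale a s" for s
  have region: "0 < s" "0 < Hker_scale a s" "\<bar>Hker_cos a s\<bar> \<le> 1" if "s \<in> S" for s
    using physical_region_Hker_bounds[OF \<open>0 < \<mu>\<close> a_range] that by (simp_all add: S_def)
  have Abs_nonneg: "0 \<le> Abs s (s2plus s a)" if "s \<in> S" for s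
  proof -
    have s: "2 * \<mu> / 3 \<le> s"
      using that by (simp add: S_def)
    show ?thesis
      by (rule partial_wave_sum_nonneg_physical[OF \<open>0 < \<mu>\<close> a_range s dim Phi_pos[OF s] _
          unitarity[OF s]]) (use pw_bounds[OF s] in blast)
  qed
  have F_nonneg: "0 \<le> F s" for s
  proof (cases "s \<in> S")
    case True
    then show ?thesis
      using region[OF True] Abs_nonneg[OF True] by (simp add: F_def)
  qed (simp add: F_def)
  have t_bound: "\<bar>Hker_cos a s\<bar> \<le> 1" if "F s \<noteq> 0" for s
  proof -
    have "s \<in> S"
      using that by (rule contrapos_np) (simp add: F_def)
    then show ?thesis
      by (rule region)
  qed
  have integrand: "indicator S s *\<^sub>R (of_real (Abs s (s2plus s a) / s) * Hker a s z) =
      - (of_real (F s) * z / (1 - 2 * of_real (Hker_cos a s) * z + z^2))" for s z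
    unfolding F_def using region(1)
    by (intro indicator_Hker_eq[where g = "\<lambda>s. Abs s (s2plus s a) / s"]) blast
  have kernel_int: "integrable lborel
      (\<lambda>s. of_real (F s) * z / (1 - 2 * of_real (Hker_cos a s) * z + z^2))"
    if "norm z < 1" for z :: complex
    using disp_int[OF that] unfolding set_integrable_def S_def[symmetric] integrand by simp
  have disp_kernel: "M z a = M 0 a + - of_real (1 / pi) *
      (LINT s|lborel. of_real (F s) * z / (1 - 2 * of_real (Hker_cos a s) * z + z^2))"
    if "norm z < 1" for z
    using disp[OF that] unfolding set_lebesgue_integral_def S_def[symmetric] integrand by simp
  have nontrivial_F: "\<not> (AE s in lborel. F s = 0)"
  proof
    have "Abs s (s2plus s a) = 0" if "F s = 0" and "s \<in> S" for s
      using that region[OF \<open>s \<in> S\<close>] by (simp add: F_def)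
    moreover assume "AE s in lborel. F s = 0"
    ultimately have "AE s in lborel. s \<ge> 2 * \<mu> / 3 \<longrightarrow> Abs s (s2plus s a) = 0"
      by (auto simp: S_def elim: AE_mp)
    with nontrivial show False ..
  qed
  have "- complex_of_real (1 / pi) \<noteq> 0"
    by simp
  note hyps = F_nonneg nontrivial_F Hker_cos_measurable t_bound kernel_int series disp_kernel this
  note coeff = powser_coeff_ratio_le_of_chebyshev_moments[where F = F and t = "Hker_cos a"
      and c = "\<lambda>n. coef n a * of_real (a ^ (2 * n))" and f = "\<lambda>z. M z a"
      and C = "- of_real (1 / pi)"]
  from hyps have "coef 1 a * of_real (a ^ (2 * 1)) \<noteq> 0"
    by (rule coeff(1))
  moreover have
    "norm (coef n a * of_real (a ^ (2 * n)) / (coef 1 a * of_real (a ^ (2 * 1)))) \<le> real n"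
    if "1 \<le> n" for n
    using hyps that by (rule coeff(2))
  ultimately show ?thesis
    by simp
qed

end
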